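(* Let $u\in\mathbb{R}^m$. If there exists $b\in\mathbb{R}^p$ with $\mathcal{P}(b)\neq\emptyset$ such that $$K^+\overline{g}_{\mathcal{P}}(u,b)+K^-\underline{g}_{\mathcal{P}}(u,b)\le b\quad\text{and}\quad L^+\overline{\psi}_{\mathcal{P}}(u,b)+L^-\underline{\psi}_{\mathcal{P}}(u,b)\le 0,$$ then $u$ is feasible, i.e. there exists $x\in\mathbb{R}^n$ with $f(x,u)=0$ and $h(x,u)\le 0$.
   Context: Let $f:\mathbb{R}^n\times\mathbb{R}^m\to\mathbb{R}^n$ and $h:\mathbb{R}^n\times\mathbb{R}^m\to\mathbb{R}^r$ be continuous and differentiable, with $f=M\psi$, $h=L\psi$ for a continuously differentiable $\psi:\mathbb{R}^n\times\mathbb{R}^m\to\mathbb{R}^q$ and constant matrices $M\in\mathbb{R}^{n\times q}$, $L\in\mathbb{R}^{r\times q}$. There is a base point $(x_0,u_0)$ with $f(x_0,u_0)=0$, $h(x_0,u_0)\le0$, at which $J_{f,0}=\frac{\partial f}{\partial x}\big|_{(x_0,u_0)}$ is nonsingular; $J_{\psi,0}=\frac{\partial \psi}{\partial x}\big|_{(x_0,u_0)}$ and $g(x,u)=\psi(x,u)-J_{\psi,0}x$. Let $\underline{g},\overline{g},\underline{\psi},\overline{\psi}:\mathbb{R}^n\times\mathbb{R}^m\to\mathbb{R}^q$ satisfy $\underline{g}_k\le g_k\le\overline{g}_k$ and $\underline{\psi}_k\le\psi_k\le\overline{\psi}_k$ everywhere for each $k$. A fixed matrix $A\in\mathbb{R}^{p\times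 n}$ is chosen so that $\mathcal{P}(b)=\{x:Ax\le b\}$ is bounded for every $b$. Define $\overline{g}_{\mathcal{P},k}(u,b)=\max_{x\in\mathcal{P}(b)}\overline{g}_k(x,u)$, $\underline{g}_{\mathcal{P},k}(u,b)=\min_{x\in\mathcal{P}(b)}\underline{g}_k(x,u)$, $\overline{\psi}_{\mathcal{P},k}(u,b)=\max_{x\in\mathcal{P}(b)}\overline{\psi}_k(x,u)$, $\underline{\psi}_{\mathcal{P},k}(u,b)=\min_{x\in\mathcal{P}(b)}\underline{\psi}_k(x,u)$ (assumed attained). Let $K=-AJ_{f,0}^{-1}M$. For a matrix $N$, $N^+$ keeps the positive entries of $N$ and sets others to $0$, and $N^-$ keeps the negative entries and sets others to $0$. $u$ is feasible if there is $x$ with $f(x,u)=0$ and $h(x,u)\le0$. Vector inequalities are componentwise. *)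

theory Defs
  imports "HOL-Analysis.Analysis"
begin

text \<open>Vector inequalities on real^'k are the library's componentwise order (less_eq_vec_def).\<close>

definition polyP :: "real^'n^'p \<Rightarrow> real^'p \<Rightarrow> (real^'n) set" where
  "polyP A b = {x. A *v x \<le> b}"

definition mat_pos :: "real^'c^'r \<Rightarrow> real^'c^'r" where
  "mat_pos N = (\<chi> i j. if N $ i $ j > 0 then N $ i $ j else 0)"

definition mat_neg :: "real^'c^'r \<Rightarrow> real^'c^'r" where
  "mat_neg N = (\<chi> i j. if N $ i $ j < 0 then N $ i $ j else 0)"

text \<open>Componentwise max / min over P(b) of a bounding function (maxima/minima are assumed attained
  in the theorem, so Sup/Inf coincide with Max/Min).\<close>
definition maxP :: "real^'n^'p \<Rightarrow> (real^'n \<Rightarrow> real^'m \<Rightarrow> real^'q) \<Rightarrow> real^'m \<Rightarrow> real^'p \<Rightarrow> real^'q" where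
  "maxP A F u b = (\<chi> k. Sup ((\<lambda>x. F x u $ k) ` polyP A b))"

definition minP :: "real^'n^'p \<Rightarrow> (real^'n \<Rightarrow> real^'m \<Rightarrow> real^'q) \<Rightarrow> real^'m \<Rightarrow> real^'p \<Rightarrow> real^'q" where
  "minP A F u b = (\<chi> k. Inf ((\<lambda>x. F x u $ k) ` polyP A b))"

end

theory Submission
  imports Defs
begin

text \<open>Since \<open>f x u = J\<^sub>f x + M g(x,u)\<close>, the zeros of \<open>f(\<cdot>,u)\<close> are the fixed points of
  \<open>T x = -J\<^sub>f\<^sup>-\<^sup>1 M g(x,u)\<close>. For \<open>x \<in> P(b)\<close>, \<open>g(x,u)\<close> lies in the box between the minima and maxima
  of the bounds over \<open>P(b)\<close>, and interval arithmetic bounds \<open>A T x = K g(x,u)\<close> by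
  \<open>K\<^sup>+ g\<^sub>P\<^sup>max + K\<^sup>- g\<^sub>P\<^sup>min \<le> b\<close>; so \<open>T\<close> maps the compact convex polytope \<open>P(b)\<close> into itself and
  Brouwer's theorem gives a zero \<open>x \<in> P(b)\<close>. The same interval bound applied to \<open>L \<psi>(x,u)\<close> gives
  \<open>h(x,u) \<le> 0\<close>.\<close>

lemma matrix_vector_mult_le_pos_neg:
  fixes N :: "real^'c^'r" and y lo hi :: "real^'c"
  assumes "lo \<le> y" "y \<le> hi"
  shows "N *v y \<le> mat_pos N *v hi + mat_neg N *v lo"
proof -
  have "(N *v y) $ i \<le> (mat_pos N *v hi + mat_neg N *v lo) $ i" for i
  proof -
    have entry: "N$i$j * y$j \<le> mat_pos N $i$j * hi$j + mat_neg N $i$j * lo$j" for j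
    proof -
      have "lo$j \<le> y$j" "y$j \<le> hi$j" using assms by (auto simp: less_eq_vec_def)
      then show ?thesis
        by (auto simp: mat_pos_def mat_neg_def intro: mult_left_mono mult_left_mono_neg)
    qed
    have "(N *v y) $ i = (\<Sum>j\<in>UNIV. N$i$j * y$j)" by (simp add: matrix_vector_mult_def)
    also have "\<dots> \<le> (\<Sum>j\<in>UNIV. mat_pos N $i$j * hi$j + mat_neg N $i$j * lo$j)"
      by (rule sum_mono) (rule entry)
    also have "\<dots> = (mat_pos N *v hi + mat_neg N *v lo) $ i"
      by (simp add: matrix_vector_mult_def sum.distrib)
    finally show ?thesis .
  qed
  then show ?thesis by (simp add: less_eq_vec_def)
qed

lemma polyP_eq_Inter_halfspaces: "polyP A b = (\<Inter>i. {x. A$i \<bullet> x \<le> b$i})"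
  by (auto simp: polyP_def less_eq_vec_def matrix_vector_mul_component)

lemma closed_polyP: "closed (polyP A b)"
  unfolding polyP_eq_Inter_halfspaces by (auto intro!: closed_INT closed_halfspace_le)

lemma convex_polyP: "convex (polyP A b)"
  unfolding polyP_eq_Inter_halfspaces by (auto intro!: convex_INT convex_halfspace_le)

lemma minP_le:
  fixes F :: "real^'n \<Rightarrow> real^'m \<Rightarrow> real^'q"
  assumes attained: "\<And>k. \<exists>x\<in>polyP A c. \<forall>y\<in>polyP A c. F x v $ k \<le> F y v $ k"
    and x: "x \<in> polyP A c" and le: "F x v \<le> z"
  shows "minP A F v c \<le> z"
proof -
  have "Inf ((\<lambda>x. F x v $ k) ` polyP A c) \<le> z $ k" for k
  proof -
    have "bdd_below ((\<lambda>x. F x v $ k) ` polyP A c)"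
      using attained[of k] by (auto intro: bdd_belowI2)
    then have "Inf ((\<lambda>x. F x v $ k) ` polyP A c) \<le> F x v $ k"
      using x by (auto intro: cInf_lower)
    also have "\<dots> \<le> z $ k" using le by (simp add: less_eq_vec_def)
    finally show ?thesis .
  qed
  then show ?thesis by (simp add: minP_def less_eq_vec_def)
qed

lemma maxP_ge:
  fixes F :: "real^'n \<Rightarrow> real^'m \<Rightarrow> real^'q"
  assumes attained: "\<And>k. \<exists>x\<in>polyP A c. \<forall>y\<in>polyP A c. F y v $ k \<le> F x v $ k"
    and x: "x \<in> polyP A c" and le: "z \<le> F x v"
  shows "z \<le> maxP A F v c"
proof -
  have "z $ k \<le> Sup ((\<lambda>x. F x v $ k) ` polyP A c)" for k
  proof -
    have "z $ k \<le> F x v $ k" using le by (simp add: less_eq_vec_def)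
    also have "bdd_above ((\<lambda>x. F x v $ k) ` polyP A c)"
      using attained[of k] by (auto intro: bdd_aboveI2)
    then have "F x v $ k \<le> Sup ((\<lambda>x. F x v $ k) ` polyP A c)"
      using x by (auto intro: cSup_upper)
    finally show ?thesis .
  qed
  then show ?thesis by (simp add: maxP_def less_eq_vec_def)
qed

lemma minP_maxP_enclose:
  fixes Fl Fu :: "real^'n \<Rightarrow> real^'m \<Rightarrow> real^'q"
  assumes "\<And>k. \<exists>x\<in>polyP A c. \<forall>y\<in>polyP A c. Fl x v $ k \<le> Fl y v $ k"
    and "\<And>k. \<exists>x\<in>polyP A c. \<forall>y\<in>polyP A c. Fu y v $ k \<le> Fu x v $ k"
    and "x \<in> polyP A c" and "Fl x v \<le> z \<and> z \<le> Fu x v"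
  shows "minP A Fl v c \<le> z \<and> z \<le> maxP A Fu v c"
  using assms minP_le[of A c Fl v x z] maxP_ge[of A c Fu v x z] by blast

lemma matrix_vector_mult_uminus_right: "(N::real^'c^'r) *v (- x) = - (N *v x)"
  by (simp add: vec_eq_iff matrix_vector_mult_def sum_negf)

lemma matrix_vector_mult_uminus_left: "(- (N::real^'c^'r)) *v x = - (N *v x)"
  by (simp add: vec_eq_iff matrix_vector_mult_def sum_negf)

lemma matrix_mul_matrix_inv_right:
  fixes J :: "'a::semiring_1^'n^'n"
  assumes "invertible J"
  shows "J ** matrix_inv J = mat 1"
  using assms unfolding invertible_def matrix_inv_def by (rule someI_ex[THEN conjunct1])

lemma jacobian_of_linear_image:
  fixes \<phi> :: "real^'n \<Rightarrow> real^'q"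
  assumes "((\<lambda>x. M *v \<phi> x) has_derivative (\<lambda>v. J *v v)) (at x0)"
    and "(\<phi> has_derivative (\<lambda>v. J\<phi> *v v)) (at x0)"
  shows "J = M ** J\<phi>"
proof -
  have "((\<lambda>x. M *v \<phi> x) has_derivative (\<lambda>v. M *v (J\<phi> *v v))) (at x0)"
    by (rule bounded_linear.has_derivative[OF matrix_vector_mul_bounded_linear assms(2)])
  with assms(1) have "(\<lambda>v. J *v v) = (\<lambda>v. M *v (J\<phi> *v v))" by (rule has_derivative_unique)
  then show ?thesis by (metis matrix_eq matrix_vector_mul_assoc)
qed

lemma continuous_on_partial_of_isCont:
  assumes "\<And>z. isCont (\<lambda>(x, v). \<psi> x v) z"
  shows "continuous_on S (\<lambda>x. \<psi> x u)"
proof (rule continuous_at_imp_continuous_on, rule ballI)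
  fix x
  have "isCont ((\<lambda>(x, v). \<psi> x v) \<circ> (\<lambda>x. (x, u))) x"
    using assms by (intro continuous_at_compose) simp_all
  then show "isCont (\<lambda>x. \<psi> x u) x" by (simp add: o_def)
qed

lemma polyP_self_map:
  fixes A :: "real^'n^'p" and Ji :: "real^'n^'n" and M :: "real^'q^'n"
  assumes bounds: "\<And>x. x \<in> polyP A b \<Longrightarrow> lo \<le> g x \<and> g x \<le> hi"
    and cond: "mat_pos (- (A ** Ji ** M)) *v hi + mat_neg (- (A ** Ji ** M)) *v lo \<le> b"
  shows "(\<lambda>x. - (Ji *v (M *v g x))) \<in> polyP A b \<rightarrow> polyP A b"
proof
  fix x assume "x \<in> polyP A b"
  then have "lo \<le> g x" "g x \<le> hi" using bounds by auto
  have "A *v - (Ji *v (M *v g x)) = (- (A ** Ji ** M)) *v g x"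
    by (simp add: matrix_vector_mul_assoc matrix_vector_mult_uminus_right
        matrix_vector_mult_uminus_left matrix_mul_assoc)
  also have "\<dots> \<le> b"
    using matrix_vector_mult_le_pos_neg[OF \<open>lo \<le> g x\<close> \<open>g x \<le> hi\<close>] cond by (rule order_trans)
  finally show "- (Ji *v (M *v g x)) \<in> polyP A b" by (simp add: polyP_def)
qed

lemma zero_of_fixed_point:
  fixes M :: "real^'q^'n" and J :: "real^'n^'q"
  assumes "invertible (M ** J)"
    and fixed: "x = - (matrix_inv (M ** J) *v (M *v (y - J *v x)))"
  shows "M *v y = 0"
proof -
  have "(M ** J) *v (matrix_inv (M ** J) *v w) = w" for w
    by (simp add: matrix_vector_mul_assoc matrix_mul_matrix_inv_right[OF assms(1)])
  then have "(M ** J) *v x = - (M *v (y - J *v x))"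
    by (subst fixed) (simp add: matrix_vector_mult_uminus_right)
  then show ?thesis
    by (simp add: matrix_vector_mul_assoc matrix_vector_mult_diff_distrib)
qed

theorem theorem3:
  fixes f :: "real^'n \<Rightarrow> real^'m \<Rightarrow> real^'n"
    and h :: "real^'n \<Rightarrow> real^'m \<Rightarrow> real^'r"
    and \<psi> :: "real^'n \<Rightarrow> real^'m \<Rightarrow> real^'q"
    and M :: "real^'q^'n" and L :: "real^'q^'r"
    and x0 :: "real^'n" and u0 :: "real^'m"
    and Jf :: "real^'n^'n" and J\<psi> :: "real^'n^'q"
    and gl gu \<psi>l \<psi>u :: "real^'n \<Rightarrow> real^'m \<Rightarrow> real^'q"
    and A :: "real^'n^'p"
    and u :: "real^'m" and b :: "real^'p"
  assumes \<psi>_C1: "\<exists>D :: ((real^'n) \<times> (real^'m)) \<Rightarrow> (((real^'n) \<times> (real^'m)) \<Rightarrow>\<^sub>L (real^'q)).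
              (\<forall>z. ((\<lambda>(x, v). \<psi> x v) has_derivative blinfun_apply (D z)) (at z)) \<and> continuous_on UNIV D"
    and f_def: "\<And>x v. f x v = M *v \<psi> x v"
    and h_def: "\<And>x v. h x v = L *v \<psi> x v"
    and base_f: "f x0 u0 = 0"
    and base_h: "h x0 u0 \<le> 0"
    and Jf: "((\<lambda>x. f x u0) has_derivative (\<lambda>v. Jf *v v)) (at x0)"
    and Jf_inv: "invertible Jf"
    and J\<psi>: "((\<lambda>x. \<psi> x u0) has_derivative (\<lambda>v. J\<psi> *v v)) (at x0)"
    and g_bounds: "\<And>x v. gl x v \<le> \<psi> x v - J\<psi> *v x \<and> \<psi> x v - J\<psi> *v x \<le> gu x v"
    and \<psi>_bounds: "\<And>x v. \<psi>l x v \<le> \<psi> x v \<and> \<psi> x v \<le> \<psi>u x v"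
    and P_bounded: "\<And>c. bounded (polyP A c)"
    and attained: "\<And>v c k. polyP A c \<noteq> {} \<Longrightarrow>
        (\<exists>x\<in>polyP A c. \<forall>y\<in>polyP A c. gu y v $ k \<le> gu x v $ k) \<and>
        (\<exists>x\<in>polyP A c. \<forall>y\<in>polyP A c. gl x v $ k \<le> gl y v $ k) \<and>
        (\<exists>x\<in>polyP A c. \<forall>y\<in>polyP A c. \<psi>u y v $ k \<le> \<psi>u x v $ k) \<and>
        (\<exists>x\<in>polyP A c. \<forall>y\<in>polyP A c. \<psi>l x v $ k \<le> \<psi>l y v $ k)"
    and P_nonempty: "polyP A b \<noteq> {}"
    and condK: "mat_pos (- (A ** matrix_inv Jf ** M)) *v maxP A gu u b
              + mat_neg (- (A ** matrix_inv Jf ** M)) *v minP A gl u b \<le> b"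
    and condL: "mat_pos L *v maxP A \<psi>u u b + mat_neg L *v minP A \<psi>l u b \<le> 0"
  shows "\<exists>x. f x u = 0 \<and> h x u \<le> 0"
proof -
  define T where "T x = - (matrix_inv Jf *v (M *v (\<psi> x u - J\<psi> *v x)))" for x
  have JfM: "Jf = M ** J\<psi>"
    using Jf unfolding f_def by (rule jacobian_of_linear_image[OF _ J\<psi>])
  have "continuous_on (polyP A b) (\<lambda>x. \<psi> x u)"
    using \<psi>_C1 has_derivative_continuous by (blast intro: continuous_on_partial_of_isCont)
  then have "continuous_on (polyP A b) T"
    unfolding T_def by (intro continuous_intros bounded_linear.continuous_on[OF matrix_vector_mul_bounded_linear])
  moreover have "T \<in> polyP A b \<rightarrow> polyP A b"
    unfolding T_def
    using minP_maxP_enclose attained[OF P_nonempty] g_bounds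
    by (intro polyP_self_map[OF _ condK]) blast
  moreover have "compact (polyP A b)" "convex (polyP A b)"
    using P_bounded closed_polyP convex_polyP by (auto simp: compact_eq_bounded_closed)
  ultimately obtain x where x: "x \<in> polyP A b" "T x = x"
    using brouwer P_nonempty by metis
  have "f x u = 0"
    using zero_of_fixed_point Jf_inv x(2) unfolding f_def JfM T_def by metis
  moreover have "h x u \<le> 0"
    using minP_maxP_enclose attained[OF P_nonempty] \<psi>_bounds x(1) condL unfolding h_def
    by (blast intro: order_trans[OF matrix_vector_mult_le_pos_neg])
  ultimately show ?thesis by blast
qed

end
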